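(* Let $S$ be an infinite set and $\mathcal{F}\subseteq 2^S$ closed under finite unions. Let $\mathbf{A}=(A_1,\dots,A_k)$, $k>1$, be a classification problem. Then $\mathbf{A}\in\mathit{core}_k(\mathcal{F})$ if and only if $(A_i,A_j)\in\mathit{core}_2(\mathcal{F})$ for all $1\le i\ne j\le k$.
   Context: A classification problem is a vector $(A_1,\dots,A_k)$, $k\ge1$, of pairwise disjoint infinite subsets of $S$, of length $k$. For vectors $\mathbf{B}=(B_1,\dots,B_m)$, $\mathbf{Q}=(Q_1,\dots,Q_k)$, $\mathbf{B}\le\mathbf{Q}$ means $1\le m\le k$ and there is an injective $\sigma:\{1,\dots,m\}\to\{1,\dots,k\}$ with $B_i\subseteq Q_{\sigma(i)}$. An $\mathcal{F}$-partition is a vector of pairwise disjoint members of $\mathcal{F}$ whose union is $S$. $\mathit{class}_k(\mathcal{F})$: classification problems $\mathbf{A}$ of length $k$ with $\mathbf{A}\le\mathbf{Q}$ for some $\mathcal{F}$-partition $\mathbf{Q}$ of length $k$. For $k>1$, $\mathit{core}_k(\mathcal{F})$ is the set of classification problems $\mathbf{A}$ of length $k$ such that every classification problem $\mathbf{A}'\le\mathbf{A}$ of length $|\mathbf{A}'|>1$ satisfies $\mathbf{A}'\notin\mathit{class}_{|\mathbf{A}'|}(\mathcal{F})$. *)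

theory Defs
  imports Main
begin

text \<open>Vectors are lists; index i of the paper (1-based) is position i-1 of the list.\<close>

definition pairwise_disj :: "'a set list \<Rightarrow> bool" where
  "pairwise_disj A \<longleftrightarrow> (\<forall>i<length A. \<forall>j<length A. i \<noteq> j \<longrightarrow> A ! i \<inter> A ! j = {})"

definition classification_problem :: "'a set \<Rightarrow> 'a set list \<Rightarrow> bool" where
  "classification_problem S A \<longleftrightarrow> length A \<ge> 1 \<and> pairwise_disj A \<and>
     (\<forall>i<length A. A ! i \<subseteq> S \<and> infinite (A ! i))"

definition vec_le :: "'a set list \<Rightarrow> 'a set list \<Rightarrow> bool" where
  "vec_le B Q \<longleftrightarrow> 1 \<le> length B \<and> length B \<le> length Q \<and>
     (\<exists>\<sigma>. inj_on \<sigma> {..<length B} \<and> \<sigma> ` {..<length B} \<subseteq> {..<length Q} \<and>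
          (\<forall>i<length B. B ! i \<subseteq> Q ! (\<sigma> i)))"

definition F_partition :: "'a set \<Rightarrow> 'a set set \<Rightarrow> 'a set list \<Rightarrow> bool" where
  "F_partition S F Q \<longleftrightarrow> pairwise_disj Q \<and> set Q \<subseteq> F \<and> \<Union> (set Q) = S"

definition class_k :: "'a set \<Rightarrow> 'a set set \<Rightarrow> nat \<Rightarrow> 'a set list set" where
  "class_k S F k = {A. classification_problem S A \<and> length A = k \<and>
     (\<exists>Q. F_partition S F Q \<and> length Q = k \<and> vec_le A Q)}"

definition core_k :: "'a set \<Rightarrow> 'a set set \<Rightarrow> nat \<Rightarrow> 'a set list set" where
  "core_k S F k = {A. classification_problem S A \<and> length A = k \<and>
     (\<forall>A'. classification_problem S A' \<and> vec_le A' A \<and> length A' > 1 \<longrightarrow>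
            A' \<notin> class_k S F (length A'))}"

end

theory Submission
  imports Defs
begin

text \<open>A sub-problem lying in \<open>class\<close> contains a pair of its entries lying in \<open>class\<^sub>2\<close>: merge all
  blocks of the witnessing \<open>\<F>\<close>-partition except the one containing the first entry, which
  stays in \<open>\<F>\<close> by closure under finite unions. Conversely, every pair of entries of a
  problem is below it, and \<open>\<le>\<close> is transitive.\<close>

lemma Union_closed_finite:
  assumes "\<And>X Y. X \<in> F \<Longrightarrow> Y \<in> F \<Longrightarrow> X \<union> Y \<in> F"
    and "finite \<X>" "\<X> \<noteq> {}" "\<X> \<subseteq> F"
  shows "\<Union>\<X> \<in> F"
  using assms(2-4) by (induction \<X> rule: finite_ne_induct) (simp_all add: assms(1))

lemma pairwise_disj_pair: "pairwise_disj [X, Y] \<longleftrightarrow> X \<inter> Y = {}"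
  unfolding pairwise_disj_def by (auto simp: less_Suc_eq)

lemma classification_problem_pair:
  assumes "classification_problem S A" "i < length A" "j < length A" "i \<noteq> j"
  shows "classification_problem S [A ! i, A ! j]"
  using assms unfolding classification_problem_def pairwise_disj_def
  by (auto simp: less_2_cases_iff nth_Cons' split: if_splits)

lemma vec_le_trans:
  assumes "vec_le A B" "vec_le B C"
  shows "vec_le A C"
proof -
  obtain \<sigma> where \<sigma>: "inj_on \<sigma> {..<length A}" "\<sigma> ` {..<length A} \<subseteq> {..<length B}"
    "\<forall>i<length A. A ! i \<subseteq> B ! \<sigma> i"
    using assms(1) unfolding vec_le_def by blast
  obtain \<tau> where \<tau>: "inj_on \<tau> {..<length B}" "\<tau> ` {..<length B} \<subseteq> {..<length C}"
    "\<forall>i<length B. B ! i \<subseteq> C ! \<tau> i"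
    using assms(2) unfolding vec_le_def by blast
  have "inj_on (\<tau> \<circ> \<sigma>) {..<length A}"
    using \<sigma>(1) inj_on_subset[OF \<tau>(1) \<sigma>(2)] by (rule comp_inj_on)
  moreover have "(\<tau> \<circ> \<sigma>) ` {..<length A} \<subseteq> {..<length C}"
    using \<sigma>(2) \<tau>(2) by (auto simp: image_comp[symmetric])
  moreover have "A ! n \<subseteq> C ! (\<tau> \<circ> \<sigma>) n" if "n < length A" for n
  proof -
    have "\<sigma> n < length B"
      using \<sigma>(2) that by auto
    then show ?thesis
      using \<sigma>(3) \<tau>(3) that by fastforce
  qed
  ultimately show ?thesis
    using assms unfolding vec_le_def by (intro conjI exI[of _ "\<tau> \<circ> \<sigma>"]) auto
qed

lemma vec_le_pairI:
  assumes "i < length A" "j < length A" "i \<noteq> j" "X \<subseteq> A ! i" "Y \<subseteq> A ! j"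
  shows "vec_le [X, Y] A"
  unfolding vec_le_def
proof (intro conjI exI[of _ "\<lambda>n. if n = 0 then i else j"])
  show "inj_on (\<lambda>n. if n = 0 then i else j) {..<length [X, Y]}"
    using assms(3) by (auto simp: inj_on_def less_2_cases_iff)
qed (use assms in \<open>auto simp: less_2_cases_iff\<close>)

lemma vec_le_nth_pair:
  assumes "vec_le B A" "i < length B" "j < length B" "i \<noteq> j"
  obtains i' j' where "i' < length A" "j' < length A" "i' \<noteq> j'"
    "B ! i \<subseteq> A ! i'" "B ! j \<subseteq> A ! j'"
proof -
  obtain \<sigma> where \<sigma>: "inj_on \<sigma> {..<length B}" "\<sigma> ` {..<length B} \<subseteq> {..<length A}"
    "\<forall>n<length B. B ! n \<subseteq> A ! \<sigma> n"
    using assms(1) unfolding vec_le_def by blast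
  have "\<sigma> i \<noteq> \<sigma> j"
    using \<sigma>(1) assms(2-4) by (auto dest: inj_onD)
  with \<sigma>(2,3) assms(2,3) show thesis
    by (intro that[of "\<sigma> i" "\<sigma> j"]) auto
qed

lemma F_partition_merge:
  assumes "\<And>X Y. X \<in> F \<Longrightarrow> Y \<in> F \<Longrightarrow> X \<union> Y \<in> F"
    and "F_partition S F Q" "a < length Q" "b < length Q" "a \<noteq> b"
  shows "F_partition S F [Q ! a, \<Union>((!) Q ` ({..<length Q} - {a}))]"
proof -
  let ?R = "\<Union>((!) Q ` ({..<length Q} - {a}))"
  have Q: "pairwise_disj Q" "set Q \<subseteq> F" "\<Union>(set Q) = S"
    using assms(2) unfolding F_partition_def by auto
  have "(!) Q ` ({..<length Q} - {a}) \<subseteq> F"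
    using Q(2) by (auto simp: set_conv_nth)
  then have "?R \<in> F"
    using assms(4,5) by (intro Union_closed_finite[OF assms(1)]) auto
  moreover have "Q ! a \<inter> ?R = {}"
    using Q(1) assms(3) unfolding pairwise_disj_def by blast
  moreover have "Q ! a \<union> ?R = S"
    using Q(3) assms(3) by (auto simp: set_conv_nth)
  ultimately show ?thesis
    using Q(2) assms(3) unfolding F_partition_def pairwise_disj_pair by auto
qed

lemma class_k_pair:
  assumes "\<And>X Y. X \<in> F \<Longrightarrow> Y \<in> F \<Longrightarrow> X \<union> Y \<in> F"
    and "B \<in> class_k S F m" "i < m" "j < m" "i \<noteq> j"
  shows "[B ! i, B ! j] \<in> class_k S F 2"
proof -
  obtain Q where Q: "F_partition S F Q" "length Q = m" "vec_le B Q"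
    and B: "classification_problem S B" "length B = m"
    using assms(2) unfolding class_k_def by blast
  obtain a b where ab: "a < m" "b < m" "a \<noteq> b" "B ! i \<subseteq> Q ! a" "B ! j \<subseteq> Q ! b"
    using vec_le_nth_pair[OF Q(3)] assms(3-5) B(2) Q(2) by metis
  let ?R = "\<Union>((!) Q ` ({..<m} - {a}))"
  have "F_partition S F [Q ! a, ?R]"
    using F_partition_merge[OF assms(1) Q(1)] ab(1-3) Q(2) by simp
  moreover have "vec_le [B ! i, B ! j] [Q ! a, ?R]"
    using ab by (intro vec_le_pairI[of 0 _ 1]) auto
  moreover have "classification_problem S [B ! i, B ! j]"
    using classification_problem_pair[OF B(1)] assms(3-5) B(2) by simp
  ultimately show ?thesis
    unfolding class_k_def by auto
qed

lemma core_k_pair: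
  assumes "A \<in> core_k S F k" "i < k" "j < k" "i \<noteq> j"
  shows "[A ! i, A ! j] \<in> core_k S F 2"
proof -
  have A: "classification_problem S A" "length A = k"
    and core: "\<And>A'. classification_problem S A' \<Longrightarrow> vec_le A' A \<Longrightarrow> length A' > 1 \<Longrightarrow>
      A' \<notin> class_k S F (length A')"
    using assms(1) unfolding core_k_def by auto
  have "vec_le [A ! i, A ! j] A"
    by (rule vec_le_pairI) (use assms(2-4) A(2) in auto)
  then have "\<And>A'. vec_le A' [A ! i, A ! j] \<Longrightarrow> vec_le A' A"
    using vec_le_trans by blast
  then show ?thesis
    using classification_problem_pair[OF A(1)] assms(2-4) A(2) core
    unfolding core_k_def by auto
qed

lemma core_k_if_pairs:
  assumes "\<And>X Y. X \<in> F \<Longrightarrow> Y \<in> F \<Longrightarrow> X \<union> Y \<in> F"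
    and "classification_problem S A" "length A = k"
    and pairs: "\<And>i j. i < k \<Longrightarrow> j < k \<Longrightarrow> i \<noteq> j \<Longrightarrow> [A ! i, A ! j] \<in> core_k S F 2"
  shows "A \<in> core_k S F k"
  unfolding core_k_def
proof (intro CollectI conjI allI impI notI assms(2,3))
  fix A' assume A': "classification_problem S A' \<and> vec_le A' A \<and> 1 < length A'"
    and "A' \<in> class_k S F (length A')"
  then have B: "[A' ! 0, A' ! 1] \<in> class_k S F 2"
    by (intro class_k_pair[OF assms(1)]) auto
  obtain i j where ij: "i < k" "j < k" "i \<noteq> j" "A' ! 0 \<subseteq> A ! i" "A' ! 1 \<subseteq> A ! j"
    using vec_le_nth_pair[of A' A 0 1] A' assms(3) by (metis less_trans zero_less_one zero_neq_one)
  have "vec_le [A' ! 0, A' ! 1] [A ! i, A ! j]"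
    using ij by (intro vec_le_pairI[of 0 _ 1]) auto
  moreover have "classification_problem S [A' ! 0, A' ! 1]"
    using A' by (intro classification_problem_pair) auto
  moreover have "[A ! i, A ! j] \<in> core_k S F 2"
    using pairs ij by blast
  ultimately have "[A' ! 0, A' ! 1] \<notin> class_k S F (length [A' ! 0, A' ! 1])"
    unfolding core_k_def by auto
  with B show False
    by (simp add: numeral_2_eq_2)
qed

theorem lemma3p4:
  fixes S :: "'a set" and F :: "'a set set" and A :: "'a set list" and k :: nat
  assumes "infinite S"
    and "F \<subseteq> Pow S"
    and "\<And>X Y. X \<in> F \<Longrightarrow> Y \<in> F \<Longrightarrow> X \<union> Y \<in> F"
    and "classification_problem S A"
    and "length A = k"
    and "k > 1"
  shows "A \<in> core_k S F k \<longleftrightarrow>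
         (\<forall>i<k. \<forall>j<k. i \<noteq> j \<longrightarrow> [A ! i, A ! j] \<in> core_k S F 2)"
  using core_k_pair core_k_if_pairs[OF assms(3-5)] by blast

end
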